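(* Let $k\ge2$, $n>2^k$, $c=2^k-2$, and assume $d=\gcd(c,n-1)>1$; let $w=(n-1)/d$ and let $y_v=0$ if $v$ is a multiple of $d$ and $y_v=\frac{1}{w(d-1)}$ otherwise, for $v\in V=\{0,\dots,n-1\}$. Then for every $v\in V$ and every integer $1\le\ell\le n-1$, $$y([v\oplus\ell]_{n-1})=\frac{\ell-\lfloor\ell/d\rfloor}{w(d-1)}\quad\text{or}\quad y([v\oplus\ell]_{n-1})=\frac{\ell-\lceil\ell/d\rceil}{w(d-1)}.$$
   Context: For integers $u,\ell$ and $r\ge1$, $[u\oplus\ell]_r=\{w\bmod r: u\le w\le u+\ell-1\}$ (empty if $\ell\le0$). For $S\subseteq V$, $y(S)=\sum_{v\in S}y_v$. *)

theory Defs
  imports Main "HOL.Real"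
begin

definition cyc_interval :: "int \<Rightarrow> int \<Rightarrow> int \<Rightarrow> int set" where
  "cyc_interval u l r = {x mod r | x. u \<le> x \<and> x \<le> u + l - 1}"

end

theory Submission
  imports Defs
begin

(* Since d divides n - 1, reducing mod n - 1 preserves divisibility by d, and a cyclic interval
   of length l <= n - 1 is the bijective image of l consecutive integers u, ..., u + l - 1.
   Hence y sums to (l - N) / (w (d - 1)), where N = (u - 1 + l) div d - (u - 1) div d counts
   the multiples of d among them. Since |d N - l| < d, the integer N is the floor or the
   ceiling of l / d. *)

lemma cyc_interval_eq_image: "cyc_interval u l r = (\<lambda>x. x mod r) ` {u..u + l - 1}"
  unfolding cyc_interval_def by (auto simp: image_iff)

lemma inj_on_mod_interval:
  fixes u l r :: int
  assumes "l \<le> r"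
  shows "inj_on (\<lambda>x. x mod r) {u..u + l - 1}"
proof (rule inj_onI)
  fix x x' assume "x \<in> {u..u + l - 1}" "x' \<in> {u..u + l - 1}" "x mod r = x' mod r"
  then have bound: "\<bar>x - x'\<bar> < r" and dvd: "r dvd x - x'"
    using assms by (auto simp only: atLeastAtMost_iff mod_eq_dvd_iff)
  show "x = x'"
  proof (rule ccontr)
    assume "x \<noteq> x'"
    then have "\<bar>r\<bar> \<le> \<bar>x - x'\<bar>" using dvd by (intro dvd_imp_le_int) simp_all
    then show False using bound by linarith
  qed
qed

lemma le_div_iff_mult_le_int:
  fixes j b d :: int
  assumes "0 < d"
  shows "j \<le> b div d \<longleftrightarrow> j * d \<le> b"
proof
  assume "j \<le> b div d"
  then have "j * d \<le> b div d * d" using assms by (simp add: mult_right_mono)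
  also have "\<dots> \<le> b" using assms by (simp add: minus_mod_eq_div_mult [symmetric])
  finally show "j * d \<le> b" .
next
  assume "j * d \<le> b"
  then have "(j * d) div d \<le> b div d" using assms by (intro zdiv_mono1)
  then show "j \<le> b div d" using assms by simp
qed

lemma card_multiples_greaterThanAtMost:
  fixes a b d :: int
  assumes "d > 0"
  shows "card {x \<in> {a<..b}. d dvd x} = nat (b div d - a div d)"
proof -
  have "a div d < j \<longleftrightarrow> a < j * d" "j \<le> b div d \<longleftrightarrow> j * d \<le> b" for j
    using le_div_iff_mult_le_int[OF assms] by (meson not_le)+
  then have "{x \<in> {a<..b}. d dvd x} = (\<lambda>j. j * d) ` {a div d<..b div d}"
    by (fastforce simp: mult.commute)
  moreover have "inj (\<lambda>j. j * d)" using assms by (simp add: inj_on_def)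
  ultimately show ?thesis by (simp add: card_image inj_on_subset)
qed

lemma card_nonmultiples_greaterThanAtMost:
  fixes a l d :: int
  assumes "d > 0" "l \<ge> 0"
  shows "int (card {x \<in> {a<..a + l}. \<not> d dvd x}) = l - ((a + l) div d - a div d)"
proof -
  let ?M = "{x \<in> {a<..a + l}. d dvd x}" and ?N = "{x \<in> {a<..a + l}. \<not> d dvd x}"
  have "card ?M + card ?N = card {a<..a + l}"
    using card_Int_Diff[of "{a<..a + l}" "{x. d dvd x}"] by (simp add: Int_def set_diff_eq)
  then have "card ?M + card ?N = nat l" by simp
  moreover have "card ?M = nat ((a + l) div d - a div d)"
    by (rule card_multiples_greaterThanAtMost[OF assms(1)])
  moreover have "a div d \<le> (a + l) div d" using assms by (simp add: zdiv_mono1)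
  ultimately show ?thesis using assms by linarith
qed

lemma card_nonmultiples_cyc_interval:
  fixes u l r d :: int
  assumes "d > 0" "d dvd r" "0 \<le> l" "l \<le> r"
  shows "int (card {x \<in> cyc_interval u l r. \<not> d dvd x})
    = l - ((u - 1 + l) div d - (u - 1) div d)"
proof -
  have interval: "{u..u + l - 1} = {u - 1<..u - 1 + l}" by auto
  have "{x \<in> cyc_interval u l r. \<not> d dvd x}
      = (\<lambda>x. x mod r) ` {x \<in> {u - 1<..u - 1 + l}. \<not> d dvd x}"
    using assms(2) unfolding cyc_interval_eq_image interval by (auto simp: dvd_mod_iff)
  moreover have "inj_on (\<lambda>x. x mod r) {x \<in> {u - 1<..u - 1 + l}. \<not> d dvd x}"
    using inj_on_mod_interval[OF assms(4), of u] unfolding interval by (rule inj_on_subset) auto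
  ultimately show ?thesis
    using card_nonmultiples_greaterThanAtMost[OF assms(1,3), of "u - 1"] by (simp add: card_image)
qed

lemma div_diff_eq_floor_or_ceiling:
  fixes a :: int and l d :: nat
  assumes "d > 0"
  shows "(a + l) div d - a div d = \<lfloor>real l / real d\<rfloor>
    \<or> (a + l) div d - a div d = \<lceil>real l / real d\<rceil>"
proof -
  define q where "q = (a + l) div d - a div d"
  have "int d * q = int l - (a + l) mod d + a mod d"
    unfolding q_def by (simp add: right_diff_distrib minus_mod_eq_mult_div [symmetric])
  moreover have "0 \<le> (a + l) mod d" "(a + l) mod d < d" "0 \<le> a mod d" "a mod d < d"
    using assms by simp_all
  ultimately have "of_int (int l - int d) < (of_int (int d * q) :: real)"
    and "of_int (int d * q) < (of_int (int l + int d) :: real)"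
    unfolding of_int_less_iff by linarith+
  then have "real l - real d < real d * of_int q" "real d * of_int q < real l + real d"
    by simp_all
  then have below: "real l / real d < of_int q + 1" and above: "of_int q - 1 < real l / real d"
    using assms by (simp_all add: field_simps)
  show ?thesis
  proof (cases "of_int q \<le> real l / real d")
    case True
    then have "\<lfloor>real l / real d\<rfloor> = q" using below by (intro floor_unique)
    then show ?thesis unfolding q_def by simp
  next
    case False
    then have "\<lceil>real l / real d\<rceil> = q" using above by (intro ceiling_unique) auto
    then show ?thesis unfolding q_def by simp
  qed
qed

theorem lemma3p2:
  fixes k n c d w :: nat and y :: "int \<Rightarrow> real"
  assumes "k \<ge> 2" and "n > 2 ^ k" and "c = 2 ^ k - 2"
    and "d = gcd c (n - 1)" and "d > 1" and "w = (n - 1) div d"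
    and "\<And>v. y v = (if int d dvd v then 0 else 1 / (real w * (real d - 1)))"
  shows "\<forall>v \<in> {0..<n}. \<forall>l::nat. 1 \<le> l \<and> l \<le> n - 1 \<longrightarrow>
      (sum y (cyc_interval (int v) (int l) (int (n - 1)))
         = (real l - of_int \<lfloor>real l / real d\<rfloor>) / (real w * (real d - 1))
       \<or> sum y (cyc_interval (int v) (int l) (int (n - 1)))
         = (real l - of_int \<lceil>real l / real d\<rceil>) / (real w * (real d - 1)))"
proof (intro ballI allI impI)
  fix v l :: nat assume l: "1 \<le> l \<and> l \<le> n - 1"
  define S where "S = cyc_interval (int v) (int l) (int (n - 1))"
  define D where "D = real w * (real d - 1)"
  define q where "q = (int v - 1 + int l) div int d - (int v - 1) div int d"
  have "int (card {x \<in> S. \<not> int d dvd x}) = int l - q"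
    unfolding S_def q_def using assms(4,5) l by (intro card_nonmultiples_cyc_interval) auto
  then have card_nonmultiples: "real (card {x \<in> S. \<not> int d dvd x}) = real l - of_int q"
    using arg_cong[where f = "of_int :: int \<Rightarrow> real"] by fastforce
  have "finite S" unfolding S_def cyc_interval_eq_image by simp
  then have "sum y S = (\<Sum>x \<in> {x \<in> S. \<not> int d dvd x}. 1 / D)"
    unfolding D_def assms(7) by (subst sum.inter_filter) (auto intro: sum.cong)
  also have "\<dots> = (real l - of_int q) / D"
    using card_nonmultiples by simp
  finally have "sum y S = (real l - of_int q) / D" .
  moreover have "q = \<lfloor>real l / real d\<rfloor> \<or> q = \<lceil>real l / real d\<rceil>"
    unfolding q_def using div_diff_eq_floor_or_ceiling[of d "int v - 1" l] assms(5) by simp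
  ultimately show "sum y (cyc_interval (int v) (int l) (int (n - 1)))
         = (real l - of_int \<lfloor>real l / real d\<rfloor>) / (real w * (real d - 1))
       \<or> sum y (cyc_interval (int v) (int l) (int (n - 1)))
         = (real l - of_int \<lceil>real l / real d\<rceil>) / (real w * (real d - 1))"
    unfolding S_def D_def by auto
qed

end
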